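(* Let $q$ be a prime power, $m,\ell\ge1$, fix a monomial order on $\mathcal{L}_q(x,q^m)^\ell$, and let $B$ be a basis of a left submodule $M\subseteq\mathcal{L}_q(x,q^m)^\ell$. Then $B$ is a minimal basis if and only if the leading positions of the elements of $B$ are pairwise distinct.
   Context: Write $[i]:=q^i$. $\mathcal{L}_q(x,q^m)$ is the ring of $q$-linearized polynomials $\sum_i a_ix^{[i]}$ ($a_i\in\mathbb{F}_{q^m}$) under addition and composition $\circ$. $\mathcal{L}_q(x,q^m)^\ell$ is a left module via $h\circ[f_1\cdots f_\ell]=[h\circ f_1\cdots h\circ f_\ell]$; a left submodule is a subset closed under addition and under this left composition. Monomials are $x^{[k]}e_i$ ($x^{[k]}$ in coordinate $i$, $e_i$ the $i$-th unit vector). A monomial order is a total order $<$ on monomials such that $x^{[k]}e_i<x^{[j]}\circ(x^{[k]}e_i)=x^{[j+k]}e_i$ for all $j>0$, and $x^{[k]}e_i<x^{[k']}e_{i'}$ implies $x^{[j]}\circ(x^{[k]}e_i)<x^{[j]}\circ(x^{[k']}e_{i'})$ for all $j\ge0$. For nonzero $f$, $\mathrm{lm}(f)$ is the greatest monomial occurring in $f$ (with nonzero coefficient), $\mathrm{lt}(f)$ is that term with its coefficient, and $\mathrm{lpos}(f)$ is the coordinate of $\mathrm{lm}(f)$. Elements $f^{(1)},\dots,f^{(s)}$ are linearly independent if $\sum a_i\circ f^{(i)}=0$ with $a_i\in\mathcal{L}_q(x,q^m)$ implies all $a_i=0$; a basis of $M$ is a generating set of linearly independent elements. For nonzero $f^{(1)},\dots,f^{(s)}$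 and $F=\{f^{(1)},\dots,f^{(s)}\}$, $f$ reduces to $h$ modulo $F$ in one step if $h=f-\sum_{i}(b_ix^{[a_i]})\circ f^{(i)}$ (sum over some of the $f^{(i)}$) with $b_i\in\mathbb{F}_{q^m}$, $a_i\ge0$, $\mathrm{lm}(f)=x^{[a_i]}\circ\mathrm{lm}(f^{(i)})$ for each such $i$, and $\mathrm{lt}(f)=\sum_i(b_ix^{[a_i]})\circ\mathrm{lt}(f^{(i)})$; $f$ is minimal w.r.t. $F$ if it cannot be reduced modulo $F$. A basis $B$ is minimal if every $b\in B$ is minimal with respect to $B\setminus\{b\}$. *)

theory Defs
  imports "HOL-Computational_Algebra.Primes"
begin

text \<open>q-linearized polynomials over a finite field 'a (intended: F_{q^m}).
  A linearized polynomial sum_i a_i x^[i] is represented by its coefficient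
  function nat => 'a with finite support.  An element of L^l is a function
  v :: nat => nat => 'a, where v i k is the coefficient of x^[k] in coordinate i;
  coordinates are 0..l-1 (coordinates i >= l are zero).  Monomials x^[k] e_i are
  encoded as pairs (k, i) with i < l.\<close>

definition Lpoly :: "(nat \<Rightarrow> 'a::zero) set" where
  "Lpoly = {f. finite {k. f k \<noteq> 0}}"

text \<open>Composition: (a x^[i]) o (b x^[j]) = a b^(q^i) x^[i+j].\<close>
definition lcomp :: "nat \<Rightarrow> (nat \<Rightarrow> 'a::field) \<Rightarrow> (nat \<Rightarrow> 'a) \<Rightarrow> (nat \<Rightarrow> 'a)" where
  "lcomp q f g = (\<lambda>k. \<Sum>i\<le>k. f i * (g (k - i)) ^ (q ^ i))"

definition lterm :: "'a::zero \<Rightarrow> nat \<Rightarrow> (nat \<Rightarrow> 'a)" where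
  "lterm b a = (\<lambda>k. if k = a then b else 0)"

definition Lvec :: "nat \<Rightarrow> (nat \<Rightarrow> nat \<Rightarrow> 'a::zero) set" where
  "Lvec l = {v. (\<forall>i\<ge>l. \<forall>k. v i k = 0) \<and> (\<forall>i. finite {k. v i k \<noteq> 0})}"

definition vzero :: "nat \<Rightarrow> nat \<Rightarrow> 'a::zero" where
  "vzero = (\<lambda>i k. 0)"

definition vadd :: "(nat \<Rightarrow> nat \<Rightarrow> 'a::plus) \<Rightarrow> (nat \<Rightarrow> nat \<Rightarrow> 'a) \<Rightarrow> (nat \<Rightarrow> nat \<Rightarrow> 'a)" where
  "vadd u v = (\<lambda>i k. u i k + v i k)"

definition vcomp :: "nat \<Rightarrow> (nat \<Rightarrow> 'a::field) \<Rightarrow> (nat \<Rightarrow> nat \<Rightarrow> 'a) \<Rightarrow> (nat \<Rightarrow> nat \<Rightarrow> 'a)" where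
  "vcomp q h v = (\<lambda>i. lcomp q h (v i))"

definition lincomb :: "nat \<Rightarrow> (nat \<Rightarrow> nat \<Rightarrow> 'a::field) set \<Rightarrow> ((nat \<Rightarrow> nat \<Rightarrow> 'a) \<Rightarrow> (nat \<Rightarrow> 'a))
    \<Rightarrow> (nat \<Rightarrow> nat \<Rightarrow> 'a)" where
  "lincomb q S a = (\<lambda>i k. \<Sum>b\<in>S. vcomp q (a b) b i k)"

definition left_submodule :: "nat \<Rightarrow> nat \<Rightarrow> (nat \<Rightarrow> nat \<Rightarrow> 'a::field) set \<Rightarrow> bool" where
  "left_submodule q l M \<longleftrightarrow> M \<subseteq> Lvec l \<and>
     (\<forall>u\<in>M. \<forall>v\<in>M. vadd u v \<in> M) \<and>
     (\<forall>h\<in>Lpoly. \<forall>v\<in>M. vcomp q h v \<in> M)"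

definition lspan :: "nat \<Rightarrow> (nat \<Rightarrow> nat \<Rightarrow> 'a::field) set \<Rightarrow> (nat \<Rightarrow> nat \<Rightarrow> 'a) set" where
  "lspan q B = {lincomb q S a | S a. finite S \<and> S \<subseteq> B \<and> (\<forall>b\<in>S. a b \<in> Lpoly)}"

definition lin_indep :: "nat \<Rightarrow> (nat \<Rightarrow> nat \<Rightarrow> 'a::field) set \<Rightarrow> bool" where
  "lin_indep q B \<longleftrightarrow> (\<forall>S a. finite S \<and> S \<subseteq> B \<and> (\<forall>b\<in>S. a b \<in> Lpoly) \<and> lincomb q S a = vzero
      \<longrightarrow> (\<forall>b\<in>S. a b = (\<lambda>k. 0)))"

definition is_basis :: "nat \<Rightarrow> (nat \<Rightarrow> nat \<Rightarrow> 'a::field) set \<Rightarrow> (nat \<Rightarrow> nat \<Rightarrow> 'a) set \<Rightarrow> bool" where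
  "is_basis q B M \<longleftrightarrow> lspan q B = M \<and> lin_indep q B"

definition Mon :: "nat \<Rightarrow> (nat \<times> nat) set" where
  "Mon l = {(k, i). i < l}"

definition monomial_order :: "nat \<Rightarrow> (nat \<times> nat \<Rightarrow> nat \<times> nat \<Rightarrow> bool) \<Rightarrow> bool" where
  "monomial_order l mless \<longleftrightarrow>
     (\<forall>s\<in>Mon l. \<not> mless s s) \<and>
     (\<forall>s\<in>Mon l. \<forall>t\<in>Mon l. \<forall>u\<in>Mon l. mless s t \<and> mless t u \<longrightarrow> mless s u) \<and>
     (\<forall>s\<in>Mon l. \<forall>t\<in>Mon l. s = t \<or> mless s t \<or> mless t s) \<and>
     (\<forall>k i j. i < l \<and> j > 0 \<longrightarrow> mless (k, i) (j + k, i)) \<and>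
     (\<forall>k i k' i' j. i < l \<and> i' < l \<and> mless (k, i) (k', i') \<longrightarrow> mless (j + k, i) (j + k', i'))"

definition vsupp :: "nat \<Rightarrow> (nat \<Rightarrow> nat \<Rightarrow> 'a::zero) \<Rightarrow> (nat \<times> nat) set" where
  "vsupp l v = {(k, i). i < l \<and> v i k \<noteq> 0}"

definition lm :: "(nat \<times> nat \<Rightarrow> nat \<times> nat \<Rightarrow> bool) \<Rightarrow> nat \<Rightarrow> (nat \<Rightarrow> nat \<Rightarrow> 'a::zero) \<Rightarrow> nat \<times> nat" where
  "lm mless l v = (THE t. t \<in> vsupp l v \<and> (\<forall>s\<in>vsupp l v. s \<noteq> t \<longrightarrow> mless s t))"

definition lt :: "(nat \<times> nat \<Rightarrow> nat \<times> nat \<Rightarrow> bool) \<Rightarrow> nat \<Rightarrow> (nat \<Rightarrow> nat \<Rightarrow> 'a::zero) \<Rightarrow> (nat \<Rightarrow> nat \<Rightarrow> 'a)" where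
  "lt mless l v = (\<lambda>i k. if (k, i) = lm mless l v then v i k else 0)"

definition lpos :: "(nat \<times> nat \<Rightarrow> nat \<times> nat \<Rightarrow> bool) \<Rightarrow> nat \<Rightarrow> (nat \<Rightarrow> nat \<Rightarrow> 'a::zero) \<Rightarrow> nat" where
  "lpos mless l v = snd (lm mless l v)"

text \<open>f reduces (in one step) modulo F: there are some elements g of F, b_g, a_g with
  lm f = x^[a_g] o lm g and lt f = sum_g (b_g x^[a_g]) o lt g.  (The reduct h is then
  determined by f.)\<close>
definition reducible :: "nat \<Rightarrow> (nat \<times> nat \<Rightarrow> nat \<times> nat \<Rightarrow> bool) \<Rightarrow> nat \<Rightarrow> (nat \<Rightarrow> nat \<Rightarrow> 'a::field)
    \<Rightarrow> (nat \<Rightarrow> nat \<Rightarrow> 'a) set \<Rightarrow> bool" where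
  "reducible q mless l f F \<longleftrightarrow> f \<noteq> vzero \<and>
     (\<exists>S b a. finite S \<and> S \<subseteq> F \<and>
        (\<forall>g\<in>S. lm mless l f = (a g + fst (lm mless l g), snd (lm mless l g))) \<and>
        lt mless l f = (\<lambda>i k. \<Sum>g\<in>S. vcomp q (lterm (b g) (a g)) (lt mless l g) i k))"

definition minimal_wrt where
  "minimal_wrt q mless l f F \<longleftrightarrow> \<not> reducible q mless l f F"

definition minimal_basis :: "nat \<Rightarrow> (nat \<times> nat \<Rightarrow> nat \<times> nat \<Rightarrow> bool) \<Rightarrow> nat \<Rightarrow> (nat \<Rightarrow> nat \<Rightarrow> 'a::field) set
    \<Rightarrow> (nat \<Rightarrow> nat \<Rightarrow> 'a) set \<Rightarrow> bool" where
  "minimal_basis q mless l B M \<longleftrightarrow> is_basis q B M \<and> (\<forall>b\<in>B. minimal_wrt q mless l b (B - {b}))"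
  
end

theory Submission
  imports Defs
begin

text \<open>If \<open>b \<noteq> b'\<close> share a leading position, the leading monomial of one of them, say \<open>b\<close>,
  is \<open>x\<^bsup>[a]\<^esup> \<circ> lm b'\<close>; then a single term multiple of \<open>b'\<close> has the same leading term as \<open>b\<close>,
  so \<open>b\<close> reduces modulo \<open>B - {b}\<close>. Conversely, a reduction of \<open>b\<close> modulo \<open>B - {b}\<close> uses at
  least one element (the leading term of \<open>b\<close> is nonzero), and every element used has the
  leading position of \<open>b\<close>.\<close>

lemma monomial_order_irrefl:
  "monomial_order l mless \<Longrightarrow> s \<in> Mon l \<Longrightarrow> \<not> mless s s"
  unfolding monomial_order_def by blast

lemma monomial_order_trans:
  "monomial_order l mless \<Longrightarrow> s \<in> Mon l \<Longrightarrow> t \<in> Mon l \<Longrightarrow> u \<in> Mon l \<Longrightarrow>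
    mless s t \<Longrightarrow> mless t u \<Longrightarrow> mless s u"
  unfolding monomial_order_def by blast

lemma monomial_order_total:
  "monomial_order l mless \<Longrightarrow> s \<in> Mon l \<Longrightarrow> t \<in> Mon l \<Longrightarrow> s = t \<or> mless s t \<or> mless t s"
  unfolding monomial_order_def by blast

lemma monomial_order_finite_has_greatest:
  assumes mo: "monomial_order l mless"
    and "finite A" "A \<noteq> {}" "A \<subseteq> Mon l"
  shows "\<exists>t\<in>A. \<forall>s\<in>A. s \<noteq> t \<longrightarrow> mless s t"
  using assms(2-4)
proof (induction A rule: finite_ne_induct)
  case (singleton x)
  then show ?case by simp
next
  case (insert x A)
  then obtain t where t: "t \<in> A" "\<forall>s\<in>A. s \<noteq> t \<longrightarrow> mless s t" by auto
  show ?case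
  proof (cases "mless x t")
    case True
    with t show ?thesis by auto
  next
    case False
    with insert.prems t have "x = t \<or> mless t x"
      using monomial_order_total[OF mo] by blast
    with insert.prems t have "\<forall>s\<in>insert x A. s \<noteq> x \<longrightarrow> mless s x"
      using monomial_order_trans[OF mo] by (metis insert_iff subsetD)
    then show ?thesis by blast
  qed
qed

lemma finite_vsupp: "v \<in> Lvec l \<Longrightarrow> finite (vsupp l v)"
proof -
  assume "v \<in> Lvec l"
  then have "finite ((\<Union>i<l. {k. v i k \<noteq> 0}) \<times> {..<l})"
    unfolding Lvec_def by simp
  moreover have "vsupp l v \<subseteq> (\<Union>i<l. {k. v i k \<noteq> 0}) \<times> {..<l}"
    unfolding vsupp_def by auto
  ultimately show ?thesis by (rule finite_subset[rotated])
qed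

lemma vsupp_nonempty:
  assumes "v \<in> Lvec l" "v \<noteq> vzero"
  shows "vsupp l v \<noteq> {}"
proof -
  obtain i k where "v i k \<noteq> 0"
    using assms(2) unfolding vzero_def by fastforce
  moreover from this have "i < l"
    using assms(1) unfolding Lvec_def by (auto simp: not_less[symmetric])
  ultimately have "(k, i) \<in> vsupp l v" unfolding vsupp_def by simp
  then show ?thesis by blast
qed

lemma vsupp_subset_Mon: "vsupp l v \<subseteq> Mon l"
  unfolding vsupp_def Mon_def by auto

lemma lm_eqI:
  assumes mo: "monomial_order l mless"
    and t: "t \<in> vsupp l v" "\<forall>s\<in>vsupp l v. s \<noteq> t \<longrightarrow> mless s t"
  shows "lm mless l v = t"
  unfolding lm_def
proof (rule the_equality)
  fix t' assume t': "t' \<in> vsupp l v \<and> (\<forall>s\<in>vsupp l v. s \<noteq> t' \<longrightarrow> mless s t')"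
  show "t' = t"
  proof (rule ccontr)
    assume "t' \<noteq> t"
    with t t' have "mless t t'" "mless t' t" by auto
    with t t' show False
      using vsupp_subset_Mon monomial_order_trans[OF mo] monomial_order_irrefl[OF mo]
      by (metis subsetD)
  qed
qed (use t in blast)

lemma lm_in_vsupp:
  assumes mo: "monomial_order l mless" and "v \<in> Lvec l" "v \<noteq> vzero"
  shows "lm mless l v \<in> vsupp l v"
proof -
  obtain t where "t \<in> vsupp l v" "\<forall>s\<in>vsupp l v. s \<noteq> t \<longrightarrow> mless s t"
    using monomial_order_finite_has_greatest[OF mo finite_vsupp vsupp_nonempty vsupp_subset_Mon]
      assms by blast
  with lm_eqI[OF mo] show ?thesis by metis
qed

lemma lm_coeff_nonzero:
  assumes "monomial_order l mless" "v \<in> Lvec l" "v \<noteq> vzero"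
  shows "v (lpos mless l v) (fst (lm mless l v)) \<noteq> 0"
  using lm_in_vsupp[OF assms] unfolding vsupp_def lpos_def by auto

lemma lt_eq_lterm:
  "lt mless l v i =
    lterm (if i = lpos mless l v then v i (fst (lm mless l v)) else 0) (fst (lm mless l v))"
  unfolding lt_def lterm_def lpos_def by (cases "lm mless l v") auto

lemma lcomp_lterm:
  "lcomp q (lterm c a) g k = (if a \<le> k then c * g (k - a) ^ (q ^ a) else 0)"
proof -
  have "lcomp q (lterm c a) g k = (\<Sum>i\<le>k. if i = a then c * g (k - i) ^ (q ^ i) else 0)"
    unfolding lcomp_def lterm_def by (intro sum.cong) auto
  also have "\<dots> = (if a \<le> k then c * g (k - a) ^ (q ^ a) else 0)"
    by (subst sum.delta) auto
  finally show ?thesis .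
qed

lemma lcomp_one: "lcomp q (lterm 1 0) g = g"
  by (rule ext) (simp add: lcomp_lterm)

text \<open>The hypothesis \<open>q > 0\<close> makes \<open>0\<^bsup>q\<^sup>a\<^esup> = 0\<close>, i.e. composition kills the zero polynomial.\<close>

lemma lcomp_lterm_lterm:
  assumes "q > 0"
  shows "lcomp q (lterm c a) (lterm d k) = lterm (c * d ^ (q ^ a)) (a + k)"
  using assms unfolding fun_eq_iff lcomp_lterm by (auto simp: lterm_def zero_power)

lemma mem_lspan: "b \<in> B \<Longrightarrow> b \<in> lspan q B"
proof -
  assume "b \<in> B"
  moreover have "lterm 1 0 \<in> Lpoly" unfolding Lpoly_def lterm_def by simp
  moreover have "lincomb q {b} (\<lambda>_. lterm 1 0) = b"
    unfolding lincomb_def vcomp_def by (simp add: lcomp_one)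
  ultimately show "b \<in> lspan q B"
    unfolding lspan_def by (intro CollectI exI[of _ "{b}"] exI[of _ "\<lambda>_. lterm 1 0"]) auto
qed

lemma lin_indep_nonzero:
  assumes "lin_indep q B" "b \<in> B"
  shows "b \<noteq> vzero"
proof
  assume "b = vzero"
  then have "lincomb q {b} (\<lambda>_. lterm 1 0) = vzero"
    unfolding lincomb_def vcomp_def by (simp add: lcomp_one)
  moreover have "lterm 1 0 \<in> Lpoly" unfolding Lpoly_def lterm_def by simp
  ultimately have "lterm (1::'a) 0 = (\<lambda>k. 0)"
    using assms unfolding lin_indep_def by (metis empty_subsetI finite.simps insert_subset singletonI)
  then show False unfolding lterm_def by (metis one_neq_zero)
qed

lemma basis_in_Lvec:
  assumes "left_submodule q l M" "is_basis q B M" "b \<in> B"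
  shows "b \<in> Lvec l"
  using assms mem_lspan unfolding is_basis_def left_submodule_def by blast

lemma basis_nonzero: "is_basis q B M \<Longrightarrow> b \<in> B \<Longrightarrow> b \<noteq> vzero"
  unfolding is_basis_def using lin_indep_nonzero by blast

lemma reducible_by_multiple:
  fixes b g :: "nat \<Rightarrow> nat \<Rightarrow> 'a::field"
  assumes q: "q > 0" and mo: "monomial_order l mless"
    and b: "b \<in> Lvec l" "b \<noteq> vzero" and g: "g \<in> Lvec l" "g \<noteq> vzero" "g \<in> F"
    and lm_b: "lm mless l b = (a + fst (lm mless l g), snd (lm mless l g))"
  shows "reducible q mless l b F"
proof -
  define i where "i = lpos mless l g"
  define k where "k = fst (lm mless l g)"
  define c where "c = b i (a + k) / g i k ^ (q ^ a)"
  have lpos_b: "lpos mless l b = i" and fst_lm_b: "fst (lm mless l b) = a + k"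
    using lm_b unfolding i_def k_def lpos_def by simp_all
  have "g i k \<noteq> 0"
    using lm_coeff_nonzero[OF mo g(1,2)] unfolding i_def k_def .
  then have c: "c * g i k ^ (q ^ a) = b i (a + k)"
    unfolding c_def by simp
  have "lt mless l b = vcomp q (lterm c a) (lt mless l g)"
    using c q unfolding vcomp_def
    by (auto simp: fun_eq_iff lt_eq_lterm lpos_b fst_lm_b lcomp_lterm_lterm zero_power
        simp flip: i_def k_def)
  then have "lt mless l b = (\<lambda>i k. \<Sum>h\<in>{g}. vcomp q (lterm c a) (lt mless l h) i k)"
    by simp
  with lm_b g(3) b(2) show ?thesis
    unfolding reducible_def by (intro conjI exI[of _ "{g}"] exI[of _ "\<lambda>_. c"] exI[of _ "\<lambda>_. a"]) auto
qed

lemma reducible_same_lpos: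
  assumes "monomial_order l mless" "b \<in> Lvec l" "reducible q mless l b F"
  obtains g where "g \<in> F" "lpos mless l g = lpos mless l b"
proof -
  from assms(3) obtain S c a where
    "b \<noteq> vzero" "S \<subseteq> F" and
    lm_b: "\<forall>g\<in>S. lm mless l b = (a g + fst (lm mless l g), snd (lm mless l g))" and
    lt_b: "lt mless l b = (\<lambda>i k. \<Sum>g\<in>S. vcomp q (lterm (c g) (a g)) (lt mless l g) i k)"
    unfolding reducible_def by blast
  have "S \<noteq> {}"
  proof
    assume "S = {}"
    with lt_b have "lt mless l b (lpos mless l b) (fst (lm mless l b)) = 0" by simp
    with lm_coeff_nonzero[OF assms(1,2) \<open>b \<noteq> vzero\<close>] show False
      by (simp add: lt_eq_lterm lterm_def)
  qed
  then obtain g where "g \<in> S" by blast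
  with lm_b \<open>S \<subseteq> F\<close> show ?thesis
    using that unfolding lpos_def by auto
qed

lemma reducible_by_same_lpos:
  fixes b g :: "nat \<Rightarrow> nat \<Rightarrow> 'a::field"
  assumes "q > 0" "monomial_order l mless"
    and "b \<in> Lvec l" "b \<noteq> vzero" "g \<in> Lvec l" "g \<noteq> vzero" "g \<in> F"
    and "lpos mless l g = lpos mless l b" "fst (lm mless l g) \<le> fst (lm mless l b)"
  shows "reducible q mless l b F"
  using assms reducible_by_multiple[OF assms(1-7), of "fst (lm mless l b) - fst (lm mless l g)"]
  unfolding lpos_def by (simp add: prod_eq_iff)

theorem proposition17:
  fixes q m l :: nat
    and mless :: "nat \<times> nat \<Rightarrow> nat \<times> nat \<Rightarrow> bool"
    and M B :: "(nat \<Rightarrow> nat \<Rightarrow> 'a::{field,finite}) set"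
  assumes "\<exists>p e. prime p \<and> e \<ge> 1 \<and> q = p ^ e"
    and "m \<ge> 1" and "l \<ge> 1"
    and "card (UNIV :: 'a set) = q ^ m"
    and "monomial_order l mless"
    and "left_submodule q l M"
    and "is_basis q B M"
  shows "minimal_basis q mless l B M \<longleftrightarrow>
         (\<forall>b\<in>B. \<forall>b'\<in>B. b \<noteq> b' \<longrightarrow> lpos mless l b \<noteq> lpos mless l b')"
proof
  have q: "q > 0" using assms(1) by (auto simp: prime_gt_0_nat)
  have vec: "b \<in> Lvec l" "b \<noteq> vzero" if "b \<in> B" for b
    using that basis_in_Lvec[OF assms(6,7)] basis_nonzero[OF assms(7)] by blast+
  assume "minimal_basis q mless l B M"
  then have irreducible: "\<not> reducible q mless l b (B - {b})" if "b \<in> B" for b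
    using that unfolding minimal_basis_def minimal_wrt_def by blast
  show "\<forall>b\<in>B. \<forall>b'\<in>B. b \<noteq> b' \<longrightarrow> lpos mless l b \<noteq> lpos mless l b'"
  proof (intro ballI impI notI)
    fix b b' assume "b \<in> B" "b' \<in> B" "b \<noteq> b'" "lpos mless l b = lpos mless l b'"
    with vec irreducible show False
      using reducible_by_same_lpos[OF q assms(5), of b b' "B - {b}"]
        reducible_by_same_lpos[OF q assms(5), of b' b "B - {b'}"]
      by (metis Diff_iff nat_le_linear singletonD)
  qed
next
  assume distinct: "\<forall>b\<in>B. \<forall>b'\<in>B. b \<noteq> b' \<longrightarrow> lpos mless l b \<noteq> lpos mless l b'"
  have "\<not> reducible q mless l b (B - {b})" if "b \<in> B" for b
  proof
    assume "reducible q mless l b (B - {b})"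
    with distinct that show False
      using reducible_same_lpos[OF assms(5) basis_in_Lvec[OF assms(6,7) that]] by blast
  qed
  with assms(7) show "minimal_basis q mless l B M"
    unfolding minimal_basis_def minimal_wrt_def by blast
qed

end
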